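(* Let $\mu$ be a probability measure on $[0,\infty)$ with mean $1$ such that $\Lambda_\mu$ is finite on a neighborhood of $0$. Let $P$ be a probability measure and $\nu$ a $\sigma$-finite positive measure with $dP=p\,d\nu$. Define $\psi:[0,\infty)\to[0,1]$ by $\psi(y)=P(p\le y)$, and assume $$\mathrm{range}(G_\mu)\subset\mathrm{range}(\psi)\cup\{1\}.$$ Define $H_\mu:[0,1]\to[0,\infty]$ by $H_\mu(\rho)=\sup\{r\in[0,\infty):G_\mu(r)\ge\rho\}$ and $\phi:[0,\infty)\to[0,\infty)$ by $\phi(y)=H_\mu(\psi(y))1_{\psi(y)>0}$. Then $Q(dx)=\phi(p(x))P(dx)$ is a probability measure, $dQ/dP$ has distribution $\mu$ under $P$, and $Q\in\mathcal{U}^\mu(P)$.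
   Context: For a probability measure $\mu$ on $[0,\infty)$ with mean $1$, $G_\mu(r)=\mu([r,\infty))$ for $r\ge0$ and $\Lambda_\mu(\lambda)=\log\big((\lambda+1)\int_0^\infty G_\mu(z)z^\lambda\,dz\big)$ for $\lambda\ge0$. With $\Lambda_Q^f(\lambda)=\log E_Q[e^{\lambda f}]$, and $\Lambda_\mu$ finite near $0$, $\mathcal{U}^\mu(P)=\{Q \text{ probability measure}: Q\ll P,\ \Lambda_Q^{\log(dQ/dP)}(\lambda)\le\Lambda_\mu(\lambda)\ \text{for all }\lambda>0\}$. *)

theory Defs
  imports "HOL-Probability.Probability"
begin

definition G_mu :: "real measure \<Rightarrow> real \<Rightarrow> real" where
  "G_mu mu r = measure mu {r..}"

definition ereal_ln :: "ennreal \<Rightarrow> ereal" where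
  "ereal_ln x = (if x = \<infinity> then \<infinity> else if x = 0 then -\<infinity> else ereal (ln (enn2real x)))"

definition Lambda_mu :: "real measure \<Rightarrow> real \<Rightarrow> ereal" where
  "Lambda_mu mu l = ereal_ln (ennreal (l + 1) *
      (\<integral>\<^sup>+ z\<in>{0..}. ennreal (G_mu mu z * z powr l) \<partial>lborel))"

definition Lambda_f :: "'a measure \<Rightarrow> ('a \<Rightarrow> real) \<Rightarrow> real \<Rightarrow> ereal" where
  "Lambda_f Q f l = ereal_ln (\<integral>\<^sup>+ x. ennreal (exp (l * f x)) \<partial>Q)"

definition U_mu :: "real measure \<Rightarrow> 'a measure \<Rightarrow> 'a measure set" where
  "U_mu mu P = {Q. prob_space Q \<and> sets Q = sets P \<and> absolutely_continuous P Q \<and>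
      (\<forall>l>0. Lambda_f Q (\<lambda>x. ln (enn2real (RN_deriv P Q x))) l \<le> Lambda_mu mu l)}"

definition psi_fun :: "'a measure \<Rightarrow> ('a \<Rightarrow> real) \<Rightarrow> real \<Rightarrow> real" where
  "psi_fun P p y = measure P {x \<in> space P. p x \<le> y}"

definition H_mu :: "real measure \<Rightarrow> real \<Rightarrow> ereal" where
  "H_mu mu rho = Sup {ereal r | r. 0 \<le> r \<and> G_mu mu r \<ge> rho}"

definition phi_fun :: "real measure \<Rightarrow> 'a measure \<Rightarrow> ('a \<Rightarrow> real) \<Rightarrow> real \<Rightarrow> real" where
  "phi_fun mu P p y = (if psi_fun P p y > 0 then real_of_ereal (H_mu mu (psi_fun P p y)) else 0)"

end

theory Submission
  imports Defs
begin

text \<open>Since \<open>psi\<close> is the distribution function of \<open>p\<close> under \<open>P\<close> and \<open>p\<close> charges no interval on which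
  \<open>psi\<close> is constant, \<open>P(psi(p) \<le> psi(y)) = psi(y)\<close>: the variable \<open>psi(p)\<close> is uniform at every value
  of \<open>psi\<close>. The quantile \<open>H_mu\<close> is the generalised inverse of the left-continuous tail \<open>G_mu\<close>, so
  \<open>phi(p) \<ge> r\<close> iff \<open>0 < psi(p) \<le> G_mu(r)\<close>, and the range condition turns this into
  \<open>P(phi(p) \<ge> r) = G_mu(r)\<close>: the density \<open>phi(p)\<close> has law \<open>mu\<close>. Hence it has mean one, and
  \<open>E_Q[(dQ/dP)^l] = E_P[phi(p)^(l+1)] = (l+1) \<integral>\<^sub>0\<^sup>\<infinity> G_mu(z) z^l dz\<close> by the layer-cake formula, so the
  defining inequality of \<open>U_mu\<close> holds with equality.\<close>

lemma measure_eqI_atLeast: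
  fixes M N :: "real measure"
  assumes sets: "sets M = sets borel" "sets N = sets borel"
  assumes fin: "\<And>x. emeasure M {x ..} < \<infinity>"
  assumes eq: "\<And>x. emeasure M {x ..} = emeasure N {x ..}"
  shows "M = N"
proof (rule measure_eqI_generator_eq_countable)
  let ?LT = "\<lambda>a::real. {a ..}" let ?E = "range ?LT"
  show "Int_stable ?E"
  proof (rule Int_stableI)
    fix A B assume "A \<in> ?E" "B \<in> ?E"
    then obtain a b where "A = {a..}" "B = {b..}" by auto
    then have "A \<inter> B = {max a b..}" by auto
    then show "A \<inter> B \<in> ?E" by blast
  qed
  show "?E \<subseteq> Pow UNIV" "sets M = sigma_sets UNIV ?E" "sets N = sigma_sets UNIV ?E"
    unfolding sets borel_Ici by auto
  show "?LT`Rats \<subseteq> ?E" "(\<Union>i\<in>Rats. ?LT i) = UNIV"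
    "\<And>a. a \<in> ?LT`Rats \<Longrightarrow> emeasure M a \<noteq> \<infinity>"
    using fin by (auto simp: less_top) (meson Rats_no_bot_less less_imp_le)
qed (auto intro: assms countable_rat)

context real_distribution
begin

lemma G_mu_nonneg: "0 \<le> G_mu M r"
  unfolding G_mu_def by simp

lemma G_mu_antimono: "r \<le> s \<Longrightarrow> G_mu M s \<le> G_mu M r"
  unfolding G_mu_def by (intro finite_measure_mono) auto

lemma borel_measurable_G_mu: "G_mu M \<in> borel_measurable borel"
proof -
  have "(\<lambda>r. - G_mu M r) \<in> borel_measurable borel"
    by (rule borel_measurable_mono) (auto simp: mono_def intro: G_mu_antimono)
  then show ?thesis by simp
qed

lemma G_mu_tendsto_left: "(\<lambda>n. G_mu M (r - 1 / Suc n)) \<longlonglongrightarrow> G_mu M r"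
proof -
  let ?A = "\<lambda>n. {r - 1 / Suc n ..}"
  have "decseq ?A"
    by (auto simp: decseq_def intro!: order.trans[OF diff_left_mono] divide_left_mono)
  moreover have "(\<Inter>n. ?A n) = {r..}"
  proof (intro equalityI subsetI)
    fix x assume x: "x \<in> (\<Inter>n. ?A n)"
    show "x \<in> {r..}"
    proof (rule ccontr)
      assume "x \<notin> {r..}"
      then obtain n where "1 / real (Suc n) < r - x"
        using nat_approx_posE[of "r - x"] by auto
      moreover have "r - 1 / real (Suc n) \<le> x"
        using x by blast
      ultimately show False by linarith
    qed
  qed (auto intro: order.trans[of _ r])
  ultimately show ?thesis
    unfolding G_mu_def using finite_Lim_measure_decseq[of ?A] by (simp add: image_subset_iff)
qed

lemma G_mu_eventually_less:
  assumes "0 < rho"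
  obtains R where "G_mu M R < rho"
proof -
  have "decseq (\<lambda>n. {real n ..})"
    by (auto simp: decseq_def)
  moreover have "(\<Inter>n. {real n ..}) = {}"
  proof -
    have "x \<notin> (\<Inter>n. {real n ..})" for x
      using reals_Archimedean2[of x] by (auto simp: not_le)
    then show ?thesis by blast
  qed
  ultimately have "(\<lambda>n. G_mu M (real n)) \<longlonglongrightarrow> 0"
    unfolding G_mu_def using finite_Lim_measure_decseq[of "\<lambda>n. {real n ..}"] by (simp add: image_subset_iff)
  then have "\<forall>\<^sub>F n in sequentially. G_mu M (real n) < rho"
    using assms by (rule order_tendstoD)
  then show thesis
    using that by (auto simp: eventually_sequentially)
qed

definition tail_superlevel :: "real \<Rightarrow> real set" where
  "tail_superlevel rho = {r. 0 \<le> r \<and> rho \<le> G_mu M r}"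

lemma bdd_above_tail_superlevel:
  assumes "0 < rho"
  shows "bdd_above (tail_superlevel rho)"
proof -
  obtain R where R: "G_mu M R < rho"
    using G_mu_eventually_less[OF assms] .
  have "r \<le> R" if "r \<in> tail_superlevel rho" for r
  proof (rule ccontr)
    assume "\<not> r \<le> R"
    then have "G_mu M r \<le> G_mu M R"
      by (intro G_mu_antimono) simp
    with R that show False
      by (simp add: tail_superlevel_def)
  qed
  then show ?thesis
    by (rule bdd_aboveI)
qed

end

locale nonneg_real_distribution = real_distribution +
  assumes AE_nonneg: "AE x in M. 0 \<le> x"
begin

lemma G_mu_nonpos:
  assumes "r \<le> 0"
  shows "G_mu M r = 1"
proof -
  have "prob {x\<in>space M. r \<le> x} = 1"
    using AE_nonneg assms by (subst prob_Collect_eq_1) (auto elim!: eventually_mono)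
  then show ?thesis
    unfolding G_mu_def by (simp add: atLeast_def)
qed

lemma zero_mem_tail_superlevel: "rho \<le> 1 \<Longrightarrow> 0 \<in> tail_superlevel rho"
  by (simp add: tail_superlevel_def G_mu_nonpos)

lemma H_mu_eq_Sup:
  assumes "0 < rho" "rho \<le> 1"
  shows "H_mu M rho = ereal (Sup (tail_superlevel rho))"
proof -
  obtain R where R: "\<And>r. r \<in> tail_superlevel rho \<Longrightarrow> r \<le> R"
    using bdd_above_tail_superlevel[OF assms(1)] unfolding bdd_above_def by blast
  have "ereal 0 \<le> (SUP r\<in>tail_superlevel rho. ereal r)"
    using zero_mem_tail_superlevel[OF assms(2)] by (rule SUP_upper2) simp
  moreover have "(SUP r\<in>tail_superlevel rho. ereal r) \<le> ereal R"
    using R by (auto intro!: SUP_least)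
  ultimately have "\<bar>SUP r\<in>tail_superlevel rho. ereal r\<bar> \<noteq> \<infinity>"
    by auto
  moreover have "{ereal r | r. 0 \<le> r \<and> G_mu M r \<ge> rho} = ereal ` tail_superlevel rho"
    by (auto simp: tail_superlevel_def)
  ultimately show ?thesis
    unfolding H_mu_def by (simp add: ereal_Sup)
qed

lemma H_mu_nonneg:
  assumes "0 < rho" "rho \<le> 1"
  shows "0 \<le> real_of_ereal (H_mu M rho)"
  using cSup_upper[OF zero_mem_tail_superlevel bdd_above_tail_superlevel] H_mu_eq_Sup assms
  by simp

lemma le_H_mu_iff:
  assumes "0 < rho" "rho \<le> 1" "0 < r"
  shows "r \<le> real_of_ereal (H_mu M rho) \<longleftrightarrow> rho \<le> G_mu M r"
proof -
  let ?S = "tail_superlevel rho"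
  have "r \<le> Sup ?S \<longleftrightarrow> rho \<le> G_mu M r"
  proof
    assume "rho \<le> G_mu M r"
    then have "r \<in> ?S"
      using assms by (simp add: tail_superlevel_def)
    then show "r \<le> Sup ?S"
      by (rule cSup_upper[OF _ bdd_above_tail_superlevel[OF assms(1)]])
  next
    assume r_le: "r \<le> Sup ?S"
    have "?S \<noteq> {}"
      using zero_mem_tail_superlevel[OF assms(2)] by blast
    have approx: "rho \<le> G_mu M (r - 1 / Suc n)" for n
    proof -
      have below_Sup: "r - 1 / Suc n < Sup ?S"
        by (rule less_le_trans[OF _ r_le]) simp
      then obtain s where s: "s \<in> ?S" "r - 1 / Suc n < s"
        using less_cSupD[OF \<open>?S \<noteq> {}\<close> below_Sup] by blast
      then have "rho \<le> G_mu M s"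
        by (simp add: tail_superlevel_def)
      also have "\<dots> \<le> G_mu M (r - 1 / Suc n)"
        using s(2) by (intro G_mu_antimono) simp
      finally show ?thesis .
    qed
    show "rho \<le> G_mu M r"
      by (rule tendsto_lowerbound[OF G_mu_tendsto_left always_eventually]) (use approx in auto)
  qed
  then show ?thesis
    using H_mu_eq_Sup[OF assms(1,2)] by simp
qed

lemma H_mu_antimono:
  assumes "0 < rho1" "rho1 \<le> rho2" "rho2 \<le> 1"
  shows "real_of_ereal (H_mu M rho2) \<le> real_of_ereal (H_mu M rho1)"
proof (cases "0 < real_of_ereal (H_mu M rho2)")
  case True
  then have "rho2 \<le> G_mu M (real_of_ereal (H_mu M rho2))"
    using le_H_mu_iff[of rho2 "real_of_ereal (H_mu M rho2)"] assms by simp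
  then show ?thesis
    using le_H_mu_iff[OF _ _ True, of rho1] assms by simp
next
  case False
  then show ?thesis
    using H_mu_nonneg[of rho1] assms by simp
qed

end

lemma emeasure_density_nonpos:
  assumes "f \<in> borel_measurable N"
  shows "emeasure (density N (\<lambda>x. ennreal (f x))) {x\<in>space N. f x \<le> 0} = 0"
proof -
  have "emeasure (density N (\<lambda>x. ennreal (f x))) {x\<in>space N. f x \<le> 0}
      = (\<integral>\<^sup>+ x. ennreal (f x) * indicator {x\<in>space N. f x \<le> 0} x \<partial>N)"
    using assms by (intro emeasure_density) auto
  also have "\<dots> = (\<integral>\<^sup>+ x. 0 \<partial>N)"
    by (intro nn_integral_cong) (auto simp: indicator_def ennreal_eq_0_iff)
  finally show ?thesis
    by simp
qed

context finite_measure
begin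

lemma psi_fun_mono:
  assumes "p \<in> borel_measurable M" "a \<le> b"
  shows "psi_fun M p a \<le> psi_fun M p b"
  unfolding psi_fun_def using assms by (intro finite_measure_mono) auto

lemma borel_measurable_psi_fun:
  assumes "p \<in> borel_measurable M"
  shows "psi_fun M p \<in> borel_measurable borel"
  by (rule borel_measurable_mono) (auto simp: mono_def intro: psi_fun_mono[OF assms])

lemma null_sets_psi_fun_flat:
  assumes p: "p \<in> borel_measurable M" and "y \<le> q" "psi_fun M p q = psi_fun M p y"
  shows "{x\<in>space M. y < p x \<and> p x \<le> q} \<in> null_sets M"
proof -
  have "{x\<in>space M. y < p x \<and> p x \<le> q} = {x\<in>space M. p x \<le> q} - {x\<in>space M. p x \<le> y}"
    by auto
  then have "measure M {x\<in>space M. y < p x \<and> p x \<le> q} = psi_fun M p q - psi_fun M p y"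
    unfolding psi_fun_def using assms by (simp add: finite_measure_Diff subset_eq)
  moreover have "{x\<in>space M. y < p x \<and> p x \<le> q} \<in> sets M"
    using p by measurable
  ultimately show ?thesis
    using assms by (simp add: emeasure_eq_measure null_sets_def)
qed

text \<open>The stretch on which \<open>psi_fun M p\<close> stays at level \<open>psi_fun M p y\<close> to the right of \<open>y\<close> is an
  interval, covered by the countably many null sets \<open>(y, q]\<close> with \<open>q\<close> rational or maximal in it.\<close>
lemma AE_psi_fun_le_iff:
  assumes p: "p \<in> borel_measurable M"
  shows "AE x in M. psi_fun M p (p x) \<le> psi_fun M p y \<longleftrightarrow> p x \<le> y"
proof -
  let ?F = "psi_fun M p"
  define A where "A = {z. y < z \<and> ?F z = ?F y}"
  define C where "C = (A \<inter> \<rat>) \<union> (A \<inter> {Sup A})"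
  have "countable C"
    unfolding C_def by (intro countable_Un countable_finite countable_subset[OF _ countable_rat]) auto
  have cover: "\<exists>q\<in>C. z \<le> q" if z: "z \<in> A" for z
  proof (cases "\<exists>z'\<in>A. z < z'")
    case True
    then obtain z' q where z': "z' \<in> A" and q: "q \<in> \<rat>" "z < q" "q < z'"
      using Rats_dense_in_real by blast
    have "?F y \<le> ?F q" "?F q \<le> ?F z'"
      using z q by (auto simp: A_def intro!: psi_fun_mono[OF p])
    then have "q \<in> A"
      using z z' q by (auto simp: A_def)
    then show ?thesis
      using q by (intro bexI[of _ q]) (auto simp: C_def)
  next
    case False
    then have "Sup A = z"
      using z by (intro cSup_eq_maximum) (auto simp: not_less)
    then show ?thesis
      using z by (auto simp: C_def)
  qed
  have "AE x in M. \<forall>q\<in>C. \<not> (y < p x \<and> p x \<le> q)"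
  proof (rule AE_ball_countable'[OF _ \<open>countable C\<close>])
    fix q assume "q \<in> C"
    then have "y \<le> q" "?F q = ?F y"
      by (auto simp: C_def A_def)
    from null_sets_psi_fun_flat[OF p this] show "AE x in M. \<not> (y < p x \<and> p x \<le> q)"
      by (rule AE_I') auto
  qed
  then show ?thesis
  proof (rule eventually_mono)
    fix x assume "\<forall>q\<in>C. \<not> (y < p x \<and> p x \<le> q)"
    then have "p x \<notin> A"
      using cover by (force simp: A_def)
    then show "?F (p x) \<le> ?F y \<longleftrightarrow> p x \<le> y"
      using psi_fun_mono[OF p, of y "p x"] psi_fun_mono[OF p, of "p x" y]
      by (cases "p x \<le> y") (auto simp: A_def)
  qed
qed

lemma measure_psi_fun_le_psi_fun:
  assumes p: "p \<in> borel_measurable M"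
  shows "measure M {x\<in>space M. psi_fun M p (p x) \<le> psi_fun M p y} = psi_fun M p y"
proof -
  have "measure M {x\<in>space M. psi_fun M p (p x) \<le> psi_fun M p y} = measure M {x\<in>space M. p x \<le> y}"
    using AE_psi_fun_le_iff[OF p] p borel_measurable_psi_fun[OF p] by (intro measure_eq_AE) auto
  then show ?thesis
    unfolding psi_fun_def[of M p y] .
qed

end

lemma nn_integral_powr_atLeastAtMost:
  fixes l t :: real
  assumes "-1 < l" "0 \<le> t"
  shows "(\<integral>\<^sup>+ z. ennreal ((l + 1) * z powr l) * indicator {0..t} z \<partial>lborel) = ennreal (t powr (l + 1))"
proof -
  have "((\<lambda>z. (l + 1) * z powr l) has_integral (t powr (l + 1) - 0 powr (l + 1))) {0..t}"
  proof (rule fundamental_theorem_of_calculus_interior[OF assms(2)])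
    show "continuous_on {0..t} (\<lambda>z. z powr (l + 1))"
      using assms by (intro continuous_on_powr') (auto intro: continuous_on_id continuous_on_const)
    fix x assume "x \<in> {0<..<t}"
    then have "((\<lambda>z. z powr (l + 1)) has_real_derivative (l + 1) * x powr (l + 1 - 1)) (at x)"
      by (intro has_real_derivative_powr) auto
    then show "((\<lambda>z. z powr (l + 1)) has_vector_derivative (l + 1) * x powr l) (at x)"
      by (simp add: has_real_derivative_iff_has_vector_derivative)
  qed
  then show ?thesis
    using assms by (intro nn_integral_has_integral_lebesgue') auto
qed

lemma mult_exp_mult_ln_eq_powr:
  fixes x l :: real
  assumes "0 \<le> x"
  shows "x * exp (l * ln x) = x powr (l + 1)"
  using assms by (cases "x = 0") (simp_all add: powr_def distrib_right exp_add)

context nonneg_real_distribution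
begin

lemma nn_integral_powr_eq_tail_integral:
  assumes l: "-1 < l"
  shows "(\<integral>\<^sup>+ t. ennreal (t powr (l + 1)) \<partial>M)
        = ennreal (l + 1) * (\<integral>\<^sup>+ z\<in>{0..}. ennreal (G_mu M z * z powr l) \<partial>lborel)"
proof -
  define f where "f t z = (if 0 \<le> z \<and> z \<le> t then ennreal ((l + 1) * z powr l) else 0)"
    for t z :: real
  have "(\<integral>\<^sup>+ t. ennreal (t powr (l + 1)) \<partial>M) = (\<integral>\<^sup>+ t. (\<integral>\<^sup>+ z. f t z \<partial>lborel) \<partial>M)"
  proof (rule nn_integral_cong_AE)
    have f_eq: "f t z = ennreal ((l + 1) * z powr l) * indicator {0..t} z" for t z
      by (simp add: f_def indicator_def)
    show "AE t in M. ennreal (t powr (l + 1)) = (\<integral>\<^sup>+ z. f t z \<partial>lborel)"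
      using AE_nonneg by eventually_elim (simp add: f_eq nn_integral_powr_atLeastAtMost[OF l])
  qed
  also have "\<dots> = (\<integral>\<^sup>+ z. (\<integral>\<^sup>+ t. f t z \<partial>M) \<partial>lborel)"
  proof -
    interpret pair_sigma_finite M lborel ..
    have "case_prod f \<in> borel_measurable (M \<Otimes>\<^sub>M lborel)"
      unfolding f_def measurable_cong_sets[OF sets_pair_measure_cong[OF events_eq_borel sets_lborel] refl]
      by measurable
    then show ?thesis
      by (rule Fubini'[symmetric])
  qed
  also have "\<dots> = (\<integral>\<^sup>+ z. ennreal (l + 1) * (ennreal (G_mu M z * z powr l) * indicator {0..} z) \<partial>lborel)"
  proof (rule nn_integral_cong)
    fix z :: real
    have "(\<integral>\<^sup>+ t. f t z \<partial>M) = ennreal ((l + 1) * z powr l) * indicator {0..} z * emeasure M {z..}"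
      unfolding f_def by (subst nn_integral_cmult_indicator[symmetric]) (auto intro!: nn_integral_cong simp: indicator_def)
    also have "\<dots> = ennreal (l + 1) * (ennreal (G_mu M z * z powr l) * indicator {0..} z)"
    proof -
      have "ennreal ((l + 1) * z powr l) * emeasure M {z..} = ennreal ((l + 1) * (G_mu M z * z powr l))"
        using l by (simp add: G_mu_def emeasure_eq_measure ennreal_mult'' mult_ac)
      also have "\<dots> = ennreal (l + 1) * ennreal (G_mu M z * z powr l)"
        using l by (intro ennreal_mult') simp
      finally show ?thesis
        by (simp add: mult_ac)
    qed
    finally show "(\<integral>\<^sup>+ t. f t z \<partial>M) = ennreal (l + 1) * (ennreal (G_mu M z * z powr l) * indicator {0..} z)" .
  qed
  also have "\<dots> = ennreal (l + 1) * (\<integral>\<^sup>+ z\<in>{0..}. ennreal (G_mu M z * z powr l) \<partial>lborel)"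
    using borel_measurable_G_mu by (intro nn_integral_cmult) auto
  finally show ?thesis .
qed

lemma prob_space_density_mean_one:
  assumes g: "g \<in> borel_measurable P" and law: "distr P borel g = M"
    and "integrable M (\<lambda>x. x)" "(\<integral>x. x \<partial>M) = 1"
  shows "prob_space (density P (\<lambda>x. ennreal (g x)))"
proof (rule prob_spaceI)
  have "(\<integral>\<^sup>+ x. ennreal (g x) \<partial>P) = (\<integral>\<^sup>+ t. ennreal t \<partial>M)"
    unfolding law[symmetric] using g by (simp add: nn_integral_distr)
  also have "\<dots> = 1"
    using nn_integral_eq_integral[OF assms(3) AE_nonneg] assms(4) by simp
  moreover have "emeasure (density P (\<lambda>x. ennreal (g x))) (space P) = (\<integral>\<^sup>+ x. ennreal (g x) \<partial>P)"
    using g by (subst emeasure_density) (auto intro!: nn_integral_cong)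
  ultimately show "emeasure (density P (\<lambda>x. ennreal (g x))) (space (density P (\<lambda>x. ennreal (g x)))) = 1"
    by simp
qed

lemma Lambda_f_RN_deriv_density:
  assumes "sigma_finite_measure P" and g: "g \<in> borel_measurable P" "\<And>x. 0 \<le> g x"
    and law: "distr P borel g = M" and "-1 < l"
  defines "Q \<equiv> density P (\<lambda>x. ennreal (g x))"
  shows "Lambda_f Q (\<lambda>x. ln (enn2real (RN_deriv P Q x))) l = Lambda_mu M l"
proof -
  have "AE x in P. ennreal (g x) = RN_deriv P Q x"
    using g unfolding Q_def by (intro sigma_finite_measure.RN_deriv_unique[OF assms(1)]) auto
  then have RN: "AE x in P. enn2real (RN_deriv P Q x) = g x"
    by eventually_elim (metis enn2real_ennreal g(2))
  have "(\<integral>\<^sup>+ x. ennreal (exp (l * ln (enn2real (RN_deriv P Q x)))) \<partial>Q)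
      = (\<integral>\<^sup>+ x. ennreal (g x) * ennreal (exp (l * ln (enn2real (RN_deriv P Q x)))) \<partial>P)"
    unfolding Q_def using g by (intro nn_integral_density) auto
  also have "\<dots> = (\<integral>\<^sup>+ x. ennreal (g x powr (l + 1)) \<partial>P)"
    using RN by (intro nn_integral_cong_AE, eventually_elim)
      (simp add: g ennreal_mult[symmetric] mult_exp_mult_ln_eq_powr)
  also have "\<dots> = (\<integral>\<^sup>+ t. ennreal (t powr (l + 1)) \<partial>M)"
    unfolding law[symmetric] using g by (simp add: nn_integral_distr)
  finally show ?thesis
    unfolding Lambda_f_def Lambda_mu_def nn_integral_powr_eq_tail_integral[OF assms(5)] by simp
qed

context
  fixes P :: "'a measure" and p :: "'a \<Rightarrow> real"
  assumes P: "prob_space P" and p: "p \<in> borel_measurable P"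
begin

interpretation P: prob_space P
  by (rule P)

lemma phi_fun_nonneg: "0 \<le> phi_fun M P p y"
  using H_mu_nonneg P.prob_le_1 by (simp add: phi_fun_def psi_fun_def)

lemma le_phi_fun_iff:
  assumes "0 < r"
  shows "r \<le> phi_fun M P p y \<longleftrightarrow> 0 < psi_fun P p y \<and> psi_fun P p y \<le> G_mu M r"
  using le_H_mu_iff[OF _ _ assms] P.prob_le_1 assms
  by (auto simp: phi_fun_def psi_fun_def)

lemma borel_measurable_phi_fun: "phi_fun M P p \<in> borel_measurable borel"
proof -
  let ?H = "\<lambda>rho. real_of_ereal (H_mu M rho)"
  have "mono_on {0<..1} (\<lambda>rho. - ?H rho)"
    by (auto simp: mono_on_def intro!: H_mu_antimono)
  then have "?H \<in> borel_measurable (restrict_space borel {0<..1})"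
    using borel_measurable_mono_on_fnc by fastforce
  then have H_meas: "(\<lambda>rho. indicator {0<..1} rho *\<^sub>R ?H rho) \<in> borel_measurable borel"
    by (subst borel_measurable_restrict_space_iff[symmetric]) auto
  have "phi_fun M P p = (\<lambda>y. indicator {0<..1} (psi_fun P p y) *\<^sub>R ?H (psi_fun P p y))"
    using P.prob_le_1 by (auto simp: fun_eq_iff phi_fun_def psi_fun_def indicator_def)
  then show ?thesis
    using measurable_compose[OF P.borel_measurable_psi_fun[OF p] H_meas] by simp
qed

text \<open>The range condition makes the level \<open>G_mu M r\<close> a value of \<open>psi_fun P p\<close>, and at such levels
  \<open>psi_fun P p \<circ> p\<close> is uniformly distributed.\<close>
lemma measure_phi_fun_ge:
  assumes psi0: "psi_fun P p 0 = 0"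
    and range: "G_mu M ` {0..} \<subseteq> psi_fun P p ` {0..} \<union> {1}"
  shows "measure P {x\<in>space P. r \<le> phi_fun M P p (p x)} = G_mu M r"
proof (cases "0 < r")
  case False
  then have "{x\<in>space P. r \<le> phi_fun M P p (p x)} = space P"
    using phi_fun_nonneg by (auto intro: order.trans[of r 0])
  then show ?thesis
    using False G_mu_nonpos[of r] by (simp add: P.prob_space)
next
  case True
  let ?F = "psi_fun P p"
  have "{x\<in>space P. r \<le> phi_fun M P p (p x)}
      = {x\<in>space P. ?F (p x) \<le> G_mu M r} - {x\<in>space P. ?F (p x) \<le> 0}"
    using le_phi_fun_iff[OF True] by auto
  moreover have "measure P {x\<in>space P. ?F (p x) \<le> 0} = 0"
    using P.measure_psi_fun_le_psi_fun[OF p, of 0] psi0 by simp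
  ultimately have "measure P {x\<in>space P. r \<le> phi_fun M P p (p x)}
      = measure P {x\<in>space P. ?F (p x) \<le> G_mu M r}"
    using P.borel_measurable_psi_fun[OF p] p G_mu_nonneg[of r]
    by (simp add: P.finite_measure_Diff subset_eq)
  also have "\<dots> = G_mu M r"
  proof -
    have "G_mu M r \<in> G_mu M ` {0..}"
      using True by simp
    then have "G_mu M r \<in> ?F ` {0..} \<or> G_mu M r = 1"
      using range by blast
    then show ?thesis
    proof
      assume "G_mu M r \<in> ?F ` {0..}"
      then show ?thesis
        using P.measure_psi_fun_le_psi_fun[OF p] by auto
    next
      assume "G_mu M r = 1"
      then show ?thesis
        using P.prob_le_1 P.prob_space by (simp add: psi_fun_def)
    qed
  qed
  finally show ?thesis .
qed

lemma distr_phi_fun: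
  assumes "psi_fun P p 0 = 0" "G_mu M ` {0..} \<subseteq> psi_fun P p ` {0..} \<union> {1}"
  shows "distr P borel (\<lambda>x. phi_fun M P p (p x)) = M"
proof (rule measure_eqI_atLeast)
  have g: "(\<lambda>x. phi_fun M P p (p x)) \<in> borel_measurable P"
    using measurable_compose[OF p borel_measurable_phi_fun] .
  interpret D: prob_space "distr P borel (\<lambda>x. phi_fun M P p (p x))"
    using g by (intro P.prob_space_distr)
  show "emeasure (distr P borel (\<lambda>x. phi_fun M P p (p x))) {r..} < \<infinity>" for r
    by (simp add: D.emeasure_eq_measure)
  show "emeasure (distr P borel (\<lambda>x. phi_fun M P p (p x))) {r..} = emeasure M {r..}" for r
    using g measure_phi_fun_ge[OF assms, of r]
    by (simp add: emeasure_distr P.emeasure_eq_measure emeasure_eq_measure G_mu_def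
        vimage_def Int_def conj_commute)
qed simp_all

end

end

theorem mainTheorem5:
  fixes mu :: "real measure" and nu :: "'a measure" and p :: "'a \<Rightarrow> real" and P :: "'a measure"
  assumes mu_prob: "prob_space mu"
    and mu_sets: "sets mu = sets borel"
    and mu_supp: "AE x in mu. 0 \<le> x"
    and mu_int: "integrable mu (\<lambda>x. x)"
    and mu_mean: "(\<integral>x. x \<partial>mu) = 1"
    and mu_Lambda: "\<exists>e>0. \<forall>l\<in>{0..<e}. \<bar>Lambda_mu mu l\<bar> \<noteq> \<infinity>"
    and nu_sf: "sigma_finite_measure nu"
    and p_meas: "p \<in> borel_measurable nu"
    and p_nonneg: "\<forall>x\<in>space nu. 0 \<le> p x"
    and P_def: "P = density nu (\<lambda>x. ennreal (p x))"
    and P_prob: "prob_space P"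
    and range_cond: "G_mu mu ` {0..} \<subseteq> psi_fun P p ` {0..} \<union> {1}"
  shows "let Q = density P (\<lambda>x. ennreal (phi_fun mu P p (p x))) in
           prob_space Q \<and> distr P borel (\<lambda>x. phi_fun mu P p (p x)) = mu \<and> Q \<in> U_mu mu P"
proof -
  interpret nonneg_real_distribution mu
    using mu_prob mu_sets mu_supp
    by (simp add: nonneg_real_distribution_def nonneg_real_distribution_axioms_def
        real_distribution_def real_distribution_axioms_def)
  interpret P: prob_space P
    by (rule P_prob)
  let ?g = "\<lambda>x. phi_fun mu P p (p x)"
  let ?Q = "density P (\<lambda>x. ennreal (?g x))"
  have p: "p \<in> borel_measurable P"
    using p_meas unfolding P_def by (subst measurable_cong_sets[OF sets_density refl])
  have "emeasure P {x\<in>space P. p x \<le> 0} = 0"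
    using emeasure_density_nonpos[OF p_meas] unfolding P_def by simp
  then have "psi_fun P p 0 = 0"
    unfolding psi_fun_def by (simp add: P.emeasure_eq_measure)
  then have law: "distr P borel ?g = mu"
    by (rule distr_phi_fun[OF P_prob p _ range_cond])
  have g: "?g \<in> borel_measurable P"
    using measurable_compose[OF p borel_measurable_phi_fun[OF P_prob p]] .
  have prob: "prob_space ?Q"
    using prob_space_density_mean_one[OF g law mu_int mu_mean] .
  have "Lambda_f ?Q (\<lambda>x. ln (enn2real (RN_deriv P ?Q x))) l = Lambda_mu mu l" if "0 < l" for l
    using Lambda_f_RN_deriv_density[OF P.sigma_finite_measure_axioms g phi_fun_nonneg[OF P_prob p] law]
      that by simp
  then have "?Q \<in> U_mu mu P"
    unfolding U_mu_def using prob g by (auto intro!: absolutely_continuousI_density)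
  then show ?thesis
    using prob law by (simp add: Let_def)
qed

end
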